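(* Let $M=(r,q,u)$ be a floor-randomized mechanism satisfying DD. Then there exists a floor-randomized mechanism $\tilde M=(\tilde r,\tilde q,u)$ (with the same $u$) satisfying DD and left continuity such that, for all $\theta\in\Theta$, $\tilde q(\theta)\tilde r(\theta)\ge q(\theta)r(\theta)$, $\mathrm{CS}(\theta,\tilde M)\ge\mathrm{CS}(\theta,M)$ and $\mathrm{RS}_\alpha(\theta,\tilde M)\ge\mathrm{RS}_\alpha(\theta,M)$, with equality in all three for almost every $\theta$; moreover all three inequalities are strict at every $\theta$ at which $\theta\mapsto q(\theta)r(\theta)$ is not left continuous.
   Context: Setting. Let $\Theta=[\underline\theta,\overline\theta]$ with $0<\underline\theta<\overline\theta$. Let $c>0$ and let $P:\mathbb R_+\to\mathbb R_+$ be continuous and strictly decreasing with $P(\overline q)=0$ for some $\overline q>0$. Put $V(q)=\int_0^q P(z)\,dz$ and $\mathrm{TS}(\theta,q)=V(q)-c-\theta q$ for $q>0$, $\mathrm{TS}(\theta,0)=0$. Assume (A2): $\mathrm{TS}(\overline\theta,P^{-1}(\overline\theta))>0$. A mechanism is a triple $M=(r,q,u)$ of functions $r:\Theta\to[0,1]$, $q:\Theta\to[0,\overline q]$, $u:\Theta\to\mathbb R$ with $q(\theta)=0$ if and only if $r(\theta)=0$. It is IC if $u(\theta)\ge u(\theta')+(\theta'-\theta)q(\theta')r(\theta')$ for all $\theta,\theta'\in\Theta$, and IR if $u(\theta)\ge 0$ for all $\theta$. (Known fact: $M$ is IC iff $\theta\mapsto q(\theta)r(\theta)$ is nonincreasing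 and $u(\theta)=u(\overline\theta)+\int_\theta^{\overline\theta}q(z)r(z)\,dz$ for all $\theta$; an IC mechanism is IR iff $u(\overline\theta)\ge0$.) Fix $\alpha\in[0,1)$. The consumer surplus is $\mathrm{CS}(\theta,M)=r(\theta)\,\mathrm{TS}(\theta,q(\theta))-u(\theta)$ and the regulator's surplus at $\theta$ is $\mathrm{RS}_\alpha(\theta,M)=r(\theta)\,\mathrm{TS}(\theta,q(\theta))-(1-\alpha)u(\theta)$. The quantity floor $\hat q$ is the unique $q>0$ with $V(q)-qP(q)=c$. A mechanism $(r,q,u)$ is floor-randomized if it is IC, IR, $u(\overline\theta)=0$, and $\Theta$ can be partitioned into three pairwise disjoint (possibly empty) intervals $\Theta_1,\Theta_{01},\Theta_0$, with every element of $\Theta_0$ larger than every element of $\Theta_{01}$ and every element of $\Theta_{01}$ larger than every element of $\Theta_1$, such that: $q(\theta)\ge\hat q$ and $r(\theta)=1$ for $\theta\in\Theta_1$; $q(\theta)=\hat q$ and $r(\theta)\in(0,1)$ for $\theta\in\Theta_{01}$; $q(\theta)=r(\theta)=0$ for $\theta\in\Theta_0$. The efficient quantity is $q_e(\theta)=P^{-1}(\theta)$. A mechanism satisfies downward distortion (DD) if $q(\theta)\le q_e(\theta)$ for all $\theta$, with equality at $\theta=\underline\theta$. A mechanism is left continuous if $\theta\mapsto q(\theta)r(\theta)$ is left continuous at every $\theta\in(\underline\theta,\overline\theta]$. *)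

theory Defs
  imports "HOL-Analysis.Analysis"
begin

definition V :: "(real \<Rightarrow> real) \<Rightarrow> real \<Rightarrow> real" where
  "V P q = integral {0..q} P"

definition TS :: "(real \<Rightarrow> real) \<Rightarrow> real \<Rightarrow> real \<Rightarrow> real \<Rightarrow> real" where
  "TS P c \<theta> q = (if q > 0 then V P q - c - \<theta> * q else 0)"

definition qe :: "(real \<Rightarrow> real) \<Rightarrow> real \<Rightarrow> real \<Rightarrow> real" where
  "qe P qbar \<theta> = (THE q. 0 \<le> q \<and> q \<le> qbar \<and> P q = \<theta>)"

definition qhat :: "(real \<Rightarrow> real) \<Rightarrow> real \<Rightarrow> real \<Rightarrow> real" where
  "qhat P qbar c = (THE q. 0 < q \<and> q \<le> qbar \<and> V P q - q * P q = c)"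

definition mechanism ::
  "real \<Rightarrow> real \<Rightarrow> real \<Rightarrow> (real \<Rightarrow> real) \<Rightarrow> (real \<Rightarrow> real) \<Rightarrow> (real \<Rightarrow> real) \<Rightarrow> bool" where
  "mechanism \<theta>l \<theta>h qbar r q u \<longleftrightarrow>
     (\<forall>\<theta>\<in>{\<theta>l..\<theta>h}. 0 \<le> r \<theta> \<and> r \<theta> \<le> 1 \<and> 0 \<le> q \<theta> \<and> q \<theta> \<le> qbar
                      \<and> (q \<theta> = 0 \<longleftrightarrow> r \<theta> = 0))"

definition IC :: "real \<Rightarrow> real \<Rightarrow> (real \<Rightarrow> real) \<Rightarrow> (real \<Rightarrow> real) \<Rightarrow> (real \<Rightarrow> real) \<Rightarrow> bool" where
  "IC \<theta>l \<theta>h r q u \<longleftrightarrow>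
     (\<forall>\<theta>\<in>{\<theta>l..\<theta>h}. \<forall>\<theta>'\<in>{\<theta>l..\<theta>h}. u \<theta> \<ge> u \<theta>' + (\<theta>' - \<theta>) * q \<theta>' * r \<theta>')"

definition IR :: "real \<Rightarrow> real \<Rightarrow> (real \<Rightarrow> real) \<Rightarrow> bool" where
  "IR \<theta>l \<theta>h u \<longleftrightarrow> (\<forall>\<theta>\<in>{\<theta>l..\<theta>h}. u \<theta> \<ge> 0)"

definition floor_randomized ::
  "(real \<Rightarrow> real) \<Rightarrow> real \<Rightarrow> real \<Rightarrow> real \<Rightarrow> real \<Rightarrow>
   (real \<Rightarrow> real) \<Rightarrow> (real \<Rightarrow> real) \<Rightarrow> (real \<Rightarrow> real) \<Rightarrow> bool" where
  "floor_randomized P qbar c \<theta>l \<theta>h r q u \<longleftrightarrow>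
     mechanism \<theta>l \<theta>h qbar r q u \<and> IC \<theta>l \<theta>h r q u \<and> IR \<theta>l \<theta>h u \<and> u \<theta>h = 0 \<and>
     (\<exists>T1 T01 T0. is_interval T1 \<and> is_interval T01 \<and> is_interval T0 \<and>
        T1 \<union> T01 \<union> T0 = {\<theta>l..\<theta>h} \<and>
        T1 \<inter> T01 = {} \<and> T1 \<inter> T0 = {} \<and> T01 \<inter> T0 = {} \<and>
        (\<forall>x\<in>T0. \<forall>y\<in>T01. y < x) \<and> (\<forall>x\<in>T01. \<forall>y\<in>T1. y < x) \<and>
        (\<forall>\<theta>\<in>T1. q \<theta> \<ge> qhat P qbar c \<and> r \<theta> = 1) \<and>
        (\<forall>\<theta>\<in>T01. q \<theta> = qhat P qbar c \<and> 0 < r \<theta> \<and> r \<theta> < 1) \<and>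
        (\<forall>\<theta>\<in>T0. q \<theta> = 0 \<and> r \<theta> = 0))"

definition DD :: "(real \<Rightarrow> real) \<Rightarrow> real \<Rightarrow> real \<Rightarrow> real \<Rightarrow> (real \<Rightarrow> real) \<Rightarrow> bool" where
  "DD P qbar \<theta>l \<theta>h q \<longleftrightarrow>
     (\<forall>\<theta>\<in>{\<theta>l..\<theta>h}. q \<theta> \<le> qe P qbar \<theta>) \<and> q \<theta>l = qe P qbar \<theta>l"

definition left_continuous_mech ::
  "real \<Rightarrow> real \<Rightarrow> (real \<Rightarrow> real) \<Rightarrow> (real \<Rightarrow> real) \<Rightarrow> bool" where
  "left_continuous_mech \<theta>l \<theta>h r q \<longleftrightarrow>
     (\<forall>\<theta>\<in>{\<theta>l<..\<theta>h}. continuous (at_left \<theta>) (\<lambda>t. q t * r t))"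

definition CS :: "(real \<Rightarrow> real) \<Rightarrow> real \<Rightarrow> real \<Rightarrow>
    (real \<Rightarrow> real) \<Rightarrow> (real \<Rightarrow> real) \<Rightarrow> (real \<Rightarrow> real) \<Rightarrow> real" where
  "CS P c \<theta> r q u = r \<theta> * TS P c \<theta> (q \<theta>) - u \<theta>"

definition RS :: "(real \<Rightarrow> real) \<Rightarrow> real \<Rightarrow> real \<Rightarrow> real \<Rightarrow>
    (real \<Rightarrow> real) \<Rightarrow> (real \<Rightarrow> real) \<Rightarrow> (real \<Rightarrow> real) \<Rightarrow> real" where
  "RS P c \<alpha> \<theta> r q u = r \<theta> * TS P c \<theta> (q \<theta>) - (1 - \<alpha>) * u \<theta>"

end

theory Submission
  imports Defs
begin

(* Incentive compatibility forces the allocation x = q r to be nonincreasing in the type, so it has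
   at most countably many jumps. Replace x by its left-continuous regularization
   x~(t) = inf {x s | s < t}. It agrees with x off the jumps; it is still incentive compatible with
   the same utility u, because the envelope bounds for the types s < t pass to the limit s -> t;
   and x~(t) <= x(s) <= q_e(s) for all s < t gives x~(t) <= q_e(t). Every allocation level can be
   implemented with the quantity floor Q: sell max x Q with probability min 1 (x / Q). The total
   surplus of this implementation depends on the level only and is strictly increasing up to q_e,
   so, u being unchanged, raising x to x~ raises consumer and regulator surplus, strictly at jumps. *)

(* floor_surplus is the expected total surplus r * TS q of the floor implementation
   q = floor_quantity Q x, r = floor_prob Q x of an allocation level x (see floor_prob_mult_TS). *)
definition floor_surplus :: "(real \<Rightarrow> real) \<Rightarrow> real \<Rightarrow> real \<Rightarrow> real \<Rightarrow> real \<Rightarrow> real" where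
  "floor_surplus P c Q \<theta> x = (if Q \<le> x then TS P c \<theta> x else x / Q * TS P c \<theta> Q)"

definition floor_quantity :: "real \<Rightarrow> real \<Rightarrow> real" where
  "floor_quantity Q x = (if Q \<le> x then x else if 0 < x then Q else 0)"

definition floor_prob :: "real \<Rightarrow> real \<Rightarrow> real" where
  "floor_prob Q x = (if Q \<le> x then 1 else x / Q)"

lemma floor_quantity_mult_prob: "0 < Q \<Longrightarrow> 0 \<le> x \<Longrightarrow> floor_quantity Q x * floor_prob Q x = x"
  by (simp add: floor_quantity_def floor_prob_def)

lemma surplus_eq_floor_surplus:
  assumes "0 < Q" "r = 0 \<or> (Q \<le> q \<and> r = 1) \<or> (q = Q \<and> r < 1)"
  shows "r * TS P c \<theta> q = floor_surplus P c Q \<theta> (q * r)"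
  using assms by (auto simp: floor_surplus_def)

lemma floor_prob_mult_TS:
  assumes "0 < Q" "0 \<le> x"
  shows "floor_prob Q x * TS P c \<theta> (floor_quantity Q x) = floor_surplus P c Q \<theta> x"
proof -
  have "floor_prob Q x = 0 \<or> (Q \<le> floor_quantity Q x \<and> floor_prob Q x = 1)
      \<or> (floor_quantity Q x = Q \<and> floor_prob Q x < 1)"
    using assms by (auto simp: floor_quantity_def floor_prob_def)
  then show ?thesis
    using surplus_eq_floor_surplus[OF assms(1)] floor_quantity_mult_prob[OF assms] by metis
qed

locale inverse_demand =
  fixes P :: "real \<Rightarrow> real" and qbar :: real
  assumes continuous_P: "continuous_on {0..qbar} P"
    and strict_antimono_P: "strict_antimono_on {0..qbar} P"
    and qbar_pos: "0 < qbar" and P_qbar: "P qbar = 0"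
begin

lemma P_less: "x \<in> {0..qbar} \<Longrightarrow> y \<in> {0..qbar} \<Longrightarrow> x < y \<Longrightarrow> P y < P x"
  using strict_antimono_P by (auto simp: monotone_on_def)

lemma P_le: "x \<in> {0..qbar} \<Longrightarrow> y \<in> {0..qbar} \<Longrightarrow> x \<le> y \<Longrightarrow> P y \<le> P x"
  using P_less by (cases "x = y") (auto simp: less_eq_real_def)

lemma V_increment_ge:
  assumes "0 \<le> a" "a \<le> b" "b \<le> qbar"
  shows "(b - a) * P b \<le> V P b - V P a"
proof -
  have "P integrable_on {0..b}" "P integrable_on {a..b}"
    using assms by (auto intro!: integrable_continuous_interval continuous_on_subset[OF continuous_P])
  then have "integral {0..a} P + integral {a..b} P = integral {0..b} P"
    using assms by (intro Henstock_Kurzweil_Integration.integral_combine) auto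
  then have "V P b - V P a = integral {a..b} P"
    by (simp add: V_def)
  moreover have "integral {a..b} (\<lambda>_. P b) \<le> integral {a..b} P"
    using assms by (intro integral_le[OF integrable_const_ivl \<open>P integrable_on {a..b}\<close>] P_le) auto
  ultimately show ?thesis
    using assms by simp
qed

lemma V_minus_linear_strict_mono:
  assumes "0 \<le> a" "a < b" "b \<le> qbar" "\<theta> \<le> P b"
  shows "V P a - \<theta> * a < V P b - \<theta> * b"
proof -
  define m where "m = (a + b) / 2"
  have m: "a < m" "m < b"
    using assms by (auto simp: m_def)
  have "(m - a) * \<theta> < (m - a) * P m"
    using P_less[of m b] assms m by simp
  moreover have "(b - m) * \<theta> \<le> (b - m) * P b"
    using assms m by simp
  ultimately show ?thesis
    using V_increment_ge[of m b] V_increment_ge[of a m] assms m by (simp add: algebra_simps)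
qed

lemma V_minus_qP_strict_mono:
  assumes "0 \<le> a" "a < b" "b \<le> qbar"
  shows "V P a - a * P a < V P b - b * P b"
proof -
  have "a * P b \<le> a * P a"
    using P_le[of a b] assms by (simp add: mult_left_mono)
  then show ?thesis
    using V_minus_linear_strict_mono[OF assms order_refl] by (simp add: algebra_simps)
qed

lemma qe_unique:
  assumes "0 \<le> t" "t \<le> P 0"
  shows "\<exists>!q. 0 \<le> q \<and> q \<le> qbar \<and> P q = t"
proof -
  obtain x where "0 \<le> x" "x \<le> qbar" "P x = t"
    using IVT2'[of P qbar t 0] assms P_qbar qbar_pos continuous_P by auto
  moreover have "y = x" if "0 \<le> y" "y \<le> qbar" "P y = t" for y
    using P_less[of x y] P_less[of y x] that calculation by (cases x y rule: linorder_cases) auto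
  ultimately show ?thesis
    by blast
qed

lemma qe_spec:
  assumes "0 \<le> t" "t \<le> P 0"
  shows "0 \<le> qe P qbar t" "qe P qbar t \<le> qbar" "P (qe P qbar t) = t"
  using theI'[OF qe_unique[OF assms]] unfolding qe_def by auto

lemma le_qe_iff:
  assumes "0 \<le> t" "t \<le> P 0" "0 \<le> x" "x \<le> qbar"
  shows "x \<le> qe P qbar t \<longleftrightarrow> t \<le> P x"
proof
  show "t \<le> P x" if "x \<le> qe P qbar t"
    using P_le[of x "qe P qbar t"] qe_spec[OF assms(1,2)] assms that by simp
  show "x \<le> qe P qbar t" if "t \<le> P x"
    using P_less[of "qe P qbar t" x] qe_spec[OF assms(1,2)] assms that by force
qed

lemma qe_antimono:
  assumes "0 \<le> s" "s \<le> t" "t \<le> P 0"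
  shows "qe P qbar t \<le> qe P qbar s"
  using le_qe_iff[of s "qe P qbar t"] qe_spec[of t] assms by auto

lemma qhat_spec:
  assumes "0 \<le> \<theta>" "\<theta> \<le> P 0" "0 < c" "TS P c \<theta> (qe P qbar \<theta>) > 0"
  shows "0 < qhat P qbar c" "qhat P qbar c \<le> qbar"
    and "V P (qhat P qbar c) - qhat P qbar c * P (qhat P qbar c) = c"
    and "qhat P qbar c < qe P qbar \<theta>"
proof -
  define e where "e = qe P qbar \<theta>"
  define \<Phi> where "\<Phi> x = V P x - x * P x" for x
  have e: "0 \<le> e" "e \<le> qbar" "P e = \<theta>"
    using qe_spec[OF assms(1,2)] by (auto simp: e_def)
  have "0 < e"
    using assms(4) e(1) by (cases "e = 0") (auto simp: e_def TS_def)
  then have \<Phi>e: "c < \<Phi> e"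
    using assms(4) e(3) by (simp add: e_def TS_def \<Phi>_def algebra_simps)
  have \<Phi>0: "\<Phi> 0 = 0"
    by (simp add: \<Phi>_def V_def)
  have "continuous_on {0..e} (V P)" "continuous_on {0..e} P"
    using e(2) continuous_P unfolding V_def
    by (auto intro!: indefinite_integral_continuous_1 integrable_continuous_interval
        intro: continuous_on_subset)
  then have "continuous_on {0..e} \<Phi>"
    unfolding \<Phi>_def by (intro continuous_intros)
  then obtain x where x: "0 \<le> x" "x \<le> e" "\<Phi> x = c"
    using IVT'[of \<Phi> 0 c e] e(1) \<Phi>0 \<Phi>e assms(3) by auto
  have "0 < x" "x < e"
    using x \<Phi>0 \<Phi>e assms(3) by (auto simp: less_eq_real_def)
  have unique: "y = x" if "0 < y" "y \<le> qbar" "\<Phi> y = c" for y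
    using V_minus_qP_strict_mono[of x y] V_minus_qP_strict_mono[of y x] that x e(2)
    by (cases x y rule: linorder_cases) (auto simp: \<Phi>_def)
  have "qhat P qbar c = x"
    unfolding qhat_def
  proof (rule the_equality)
    show "0 < x \<and> x \<le> qbar \<and> V P x - x * P x = c"
      using \<open>0 < x\<close> x e(2) by (simp add: \<Phi>_def)
    show "y = x" if "0 < y \<and> y \<le> qbar \<and> V P y - y * P y = c" for y
      using unique that by (simp add: \<Phi>_def)
  qed
  then show "0 < qhat P qbar c" "qhat P qbar c \<le> qbar"
    "V P (qhat P qbar c) - qhat P qbar c * P (qhat P qbar c) = c" "qhat P qbar c < qe P qbar \<theta>"
    using \<open>0 < x\<close> \<open>x < e\<close> x e(2) by (simp_all add: e_def \<Phi>_def)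
qed

lemma TS_strict_mono:
  assumes "0 < x" "x < y" "0 \<le> \<theta>" "\<theta> \<le> P 0" "y \<le> qe P qbar \<theta>"
  shows "TS P c \<theta> x < TS P c \<theta> y"
proof -
  have "y \<le> qbar" "\<theta> \<le> P y"
    using qe_spec[OF assms(3,4)] le_qe_iff[OF assms(3,4), of y] assms by auto
  then show ?thesis
    using V_minus_linear_strict_mono[of x y \<theta>] assms by (simp add: TS_def)
qed

lemma TS_floor_pos:
  assumes "0 < Q" "V P Q - Q * P Q = c" "0 \<le> \<theta>" "\<theta> \<le> P 0" "Q < qe P qbar \<theta>"
  shows "0 < TS P c \<theta> Q"
proof -
  have "\<theta> < P Q"
    using P_less[of Q "qe P qbar \<theta>"] qe_spec[OF assms(3,4)] assms by auto
  moreover have "TS P c \<theta> Q = Q * (P Q - \<theta>)"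
    using assms by (simp add: TS_def algebra_simps)
  ultimately show ?thesis
    using assms(1) by simp
qed

lemma floor_surplus_strict_mono:
  assumes "0 < Q" "V P Q - Q * P Q = c" "0 \<le> \<theta>" "\<theta> \<le> P 0" "Q < qe P qbar \<theta>"
    and "0 \<le> x" "x < y" "y \<le> qe P qbar \<theta>"
  shows "floor_surplus P c Q \<theta> x < floor_surplus P c Q \<theta> y"
proof -
  have TS_Q: "0 < TS P c \<theta> Q"
    using TS_floor_pos assms by blast
  consider "Q \<le> x" | "y < Q" | "x < Q" "Q \<le> y"
    using assms by linarith
  then show ?thesis
  proof cases
    case 1
    then show ?thesis
      using TS_strict_mono[of x y \<theta> c] assms by (simp add: floor_surplus_def)
  next
    case 2
    then show ?thesis
      using TS_Q assms by (simp add: floor_surplus_def divide_strict_right_mono)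
  next
    case 3
    have "x / Q * TS P c \<theta> Q < 1 * TS P c \<theta> Q"
      using TS_Q assms 3 by (intro mult_strict_right_mono) auto
    also have "\<dots> \<le> TS P c \<theta> y"
      using TS_strict_mono[of Q y \<theta> c] assms 3 by (cases "Q = y") auto
    finally show ?thesis
      using 3 by (simp add: floor_surplus_def)
  qed
qed

lemma floor_surplus_mono:
  assumes "0 < Q" "V P Q - Q * P Q = c" "0 \<le> \<theta>" "\<theta> \<le> P 0" "Q < qe P qbar \<theta>"
    and "0 \<le> x" "x \<le> y" "y \<le> qe P qbar \<theta>"
  shows "floor_surplus P c Q \<theta> x \<le> floor_surplus P c Q \<theta> y"
  using floor_surplus_strict_mono[OF assms(1-6), of y] assms(7,8) by (cases "x = y") auto

end

(* Left-continuous regularization of g on [a, b]; at a nothing lies to the left, so g a is kept. *)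
definition left_inf :: "(real \<Rightarrow> real) \<Rightarrow> real \<Rightarrow> real \<Rightarrow> real" where
  "left_inf g a t = (if a < t then Inf (g ` {a..<t}) else g t)"

lemma left_inf_left_endpoint [simp]: "left_inf g a a = g a"
  by (simp add: left_inf_def)

context
  fixes g :: "real \<Rightarrow> real" and a b :: real
  assumes antimono_g: "antimono_on {a..b} g"
begin

private lemma g_le: "x \<in> {a..b} \<Longrightarrow> y \<in> {a..b} \<Longrightarrow> x \<le> y \<Longrightarrow> g y \<le> g x"
  using antimono_g by (simp add: monotone_on_def)

private lemma bdd_below_left: "t \<le> b \<Longrightarrow> bdd_below (g ` {a..<t})"
  using g_le[of _ b] by (intro bdd_belowI[of _ "g b"]) auto

lemma left_inf_le:
  assumes "t \<in> {a..b}" "s \<in> {a..b}" "s < t"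
  shows "left_inf g a t \<le> g s"
  using assms by (auto simp: left_inf_def intro!: cInf_lower bdd_below_left)

lemma le_left_inf:
  assumes "t \<in> {a..b}"
  shows "g t \<le> left_inf g a t"
  using assms g_le by (auto simp: left_inf_def intro!: cInf_greatest)

lemma left_inf_antimono: "antimono_on {a..b} (left_inf g a)"
proof (rule monotone_onI)
  fix x y assume xy: "x \<in> {a..b}" "y \<in> {a..b}" "x \<le> y"
  show "left_inf g a y \<le> left_inf g a x"
  proof (cases "a < x")
    case True
    then show ?thesis
      using xy unfolding left_inf_def by (auto intro!: cInf_superset_mono bdd_below_left)
  next
    case False
    then have "x = a"
      using xy by simp
    then show ?thesis
      using xy left_inf_le[of y a] by (cases "y = a") auto
  qed
qed

lemma tendsto_left_inf:
  assumes "a < t" "t \<le> b"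
  shows "(left_inf g a \<longlongrightarrow> left_inf g a t) (at_left t)"
proof (rule order_tendstoI)
  fix y assume "y < left_inf g a t"
  moreover have "\<forall>\<^sub>F s in at_left t. s \<in> {a<..<t}"
    using assms eventually_at_left_real by blast
  ultimately show "\<forall>\<^sub>F s in at_left t. y < left_inf g a s"
  proof (elim eventually_mono conjE)
    fix s assume "y < left_inf g a t" "s \<in> {a<..<t}"
    moreover have "left_inf g a t \<le> left_inf g a s"
      using calculation(2) assms by (intro monotone_onD[OF left_inf_antimono]) auto
    ultimately show "y < left_inf g a s"
      by simp
  qed
next
  fix y assume "left_inf g a t < y"
  then have "Inf (g ` {a..<t}) < y"
    using assms by (simp add: left_inf_def)
  moreover have "g ` {a..<t} \<noteq> {}"
    using assms(1) by simp
  ultimately obtain s where s: "s \<in> {a..<t}" "g s < y"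
    by (subst (asm) cInf_less_iff[OF _ bdd_below_left[OF assms(2)]]) auto
  have "\<forall>\<^sub>F x in at_left t. x \<in> {s<..<t}"
    using eventually_at_left_real[of s t] s(1) by simp
  then show "\<forall>\<^sub>F x in at_left t. left_inf g a x < y"
  proof (rule eventually_mono)
    fix x assume "x \<in> {s<..<t}"
    then have "left_inf g a x \<le> g s"
      using s assms by (intro left_inf_le) auto
    then show "left_inf g a x < y"
      using s(2) by simp
  qed
qed

lemma continuous_at_left_iff_left_inf_eq:
  assumes "a < t" "t \<le> b"
  shows "continuous (at_left t) g \<longleftrightarrow> left_inf g a t = g t"
proof
  assume "continuous (at_left t) g"
  then have "(g \<longlongrightarrow> g t) (at_left t)"
    by (simp add: continuous_within)
  moreover have "\<forall>\<^sub>F s in at_left t. left_inf g a t \<le> g s"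
    using eventually_at_left_real[OF assms(1)] assms
    by (elim eventually_mono) (auto intro: left_inf_le)
  ultimately have "left_inf g a t \<le> g t"
    by (rule tendsto_lowerbound) simp
  then show "left_inf g a t = g t"
    using le_left_inf[of t] assms by simp
next
  assume eq: "left_inf g a t = g t"
  have "\<forall>\<^sub>F s in at_left t. g t \<le> g s"
    using eventually_at_left_real[OF assms(1)] assms
    by (elim eventually_mono) (auto intro: g_le)
  moreover have "\<forall>\<^sub>F s in at_left t. g s \<le> left_inf g a s"
    using eventually_at_left_real[OF assms(1)] assms
    by (elim eventually_mono) (auto intro: le_left_inf)
  ultimately have "(g \<longlongrightarrow> g t) (at_left t)"
    using tendsto_sandwich[OF _ _ tendsto_const tendsto_left_inf[OF assms]] eq by simp
  then show "continuous (at_left t) g"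
    by (simp add: continuous_within)
qed

lemma countable_left_inf_neq: "countable {t \<in> {a..b}. left_inf g a t \<noteq> g t}"
proof (rule countable_subset)
  have "mono_on {a..b} (\<lambda>x. - g x)"
    using g_le by (auto intro: monotone_onI)
  then show "countable {t \<in> {a..b}. \<not> continuous (at t within {a..b}) (\<lambda>x. - g x)}"
    by (rule mono_on_ctble_discont)
  show "{t \<in> {a..b}. left_inf g a t \<noteq> g t}
      \<subseteq> {t \<in> {a..b}. \<not> continuous (at t within {a..b}) (\<lambda>x. - g x)}"
  proof clarify
    fix t assume t: "t \<in> {a..b}" "left_inf g a t \<noteq> g t"
      and "continuous (at t within {a..b}) (\<lambda>x. - g x)"
    then have "continuous (at t within {a..t}) (\<lambda>x. - g x)"
      by (auto intro: continuous_within_subset)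
    from continuous_minus[OF this] have "continuous (at t within {a..t}) g"
      by simp
    moreover have "a < t"
      using t by (cases "a = t") auto
    ultimately show False
      using t continuous_at_left_iff_left_inf_eq[of t] by (simp add: at_within_Icc_at_left)
  qed
qed

end

definition IC_allocation :: "real \<Rightarrow> real \<Rightarrow> (real \<Rightarrow> real) \<Rightarrow> (real \<Rightarrow> real) \<Rightarrow> bool" where
  "IC_allocation \<theta>l \<theta>h x u \<longleftrightarrow>
     (\<forall>\<theta>\<in>{\<theta>l..\<theta>h}. \<forall>\<theta>'\<in>{\<theta>l..\<theta>h}. u \<theta>' + (\<theta>' - \<theta>) * x \<theta>' \<le> u \<theta>)"

lemma IC_iff_IC_allocation: "IC \<theta>l \<theta>h r q u \<longleftrightarrow> IC_allocation \<theta>l \<theta>h (\<lambda>t. q t * r t) u"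
  by (simp add: IC_def IC_allocation_def mult.assoc)

lemma IC_allocationD:
  "IC_allocation a b x u \<Longrightarrow> s \<in> {a..b} \<Longrightarrow> t \<in> {a..b} \<Longrightarrow> u t + (t - s) * x t \<le> u s"
  unfolding IC_allocation_def by blast

lemma IC_allocation_antimono:
  assumes "IC_allocation a b x u"
  shows "antimono_on {a..b} x"
proof (rule monotone_onI)
  fix s t assume st: "s \<in> {a..b}" "t \<in> {a..b}" "s \<le> t"
  have "(t - s) * x t \<le> (t - s) * x s"
    using IC_allocationD[OF assms st(1,2)] IC_allocationD[OF assms st(2,1)]
    by (simp add: algebra_simps)
  then show "x t \<le> x s"
    using st(3) by (cases "s = t") auto
qed

lemma IC_allocation_utility_antimono:
  assumes "IC_allocation a b x u" "\<forall>t\<in>{a..b}. 0 \<le> x t"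
  shows "antimono_on {a..b} u"
proof (rule monotone_onI)
  fix s t assume st: "s \<in> {a..b}" "t \<in> {a..b}" "s \<le> t"
  have "0 \<le> (t - s) * x t"
    using st assms(2) by simp
  then show "u t \<le> u s"
    using IC_allocationD[OF assms(1) st(1,2)] by simp
qed

lemma IC_allocation_left_inf:
  assumes IC: "IC_allocation a b x u" and nonneg: "\<forall>t\<in>{a..b}. 0 \<le> x t"
  shows "IC_allocation a b (left_inf x a) u"
  unfolding IC_allocation_def
proof (intro ballI)
  fix \<theta> \<theta>' assume \<theta>: "\<theta> \<in> {a..b}" and \<theta>': "\<theta>' \<in> {a..b}"
  have anti: "antimono_on {a..b} x"
    using IC by (rule IC_allocation_antimono)
  show "u \<theta>' + (\<theta>' - \<theta>) * left_inf x a \<theta>' \<le> u \<theta>"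
  proof (cases "\<theta>' \<le> \<theta>")
    case True
    have "(\<theta>' - \<theta>) * left_inf x a \<theta>' \<le> (\<theta>' - \<theta>) * x \<theta>'"
      using True le_left_inf[OF anti \<theta>'] by (intro mult_left_mono_neg) auto
    then show ?thesis
      using IC_allocationD[OF IC \<theta> \<theta>'] by simp
  next
    case False
    then have "\<theta> < \<theta>'"
      by simp
    have bound: "\<forall>\<^sub>F t in at_left \<theta>'. (t - \<theta>) * left_inf x a \<theta>' \<le> u \<theta> - u \<theta>'"
      using eventually_at_left_real[OF \<open>\<theta> < \<theta>'\<close>]
    proof (rule eventually_mono)
      fix t assume t: "t \<in> {\<theta><..<\<theta>'}"
      then have t_in: "t \<in> {a..b}"
        using \<theta> \<theta>' by auto
      have "(t - \<theta>) * left_inf x a \<theta>' \<le> (t - \<theta>) * x t"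
        using left_inf_le[OF anti \<theta>' t_in] t by (intro mult_left_mono) auto
      also have "\<dots> \<le> u \<theta> - u t"
        using IC_allocationD[OF IC \<theta> t_in] by simp
      also have "\<dots> \<le> u \<theta> - u \<theta>'"
        using monotone_onD[OF IC_allocation_utility_antimono[OF IC nonneg] t_in \<theta>'] t by simp
      finally show "(t - \<theta>) * left_inf x a \<theta>' \<le> u \<theta> - u \<theta>'" .
    qed
    have "((\<lambda>t. (t - \<theta>) * left_inf x a \<theta>') \<longlongrightarrow> (\<theta>' - \<theta>) * left_inf x a \<theta>') (at_left \<theta>')"
      by (intro tendsto_intros)
    from tendsto_upperbound[OF this bound]
    have "(\<theta>' - \<theta>) * left_inf x a \<theta>' \<le> u \<theta> - u \<theta>'"
      by (simp add: trivial_limit_at_left_real)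
    then show ?thesis
      by simp
  qed
qed

lemma is_interval_antimono_preimage:
  fixes x :: "real \<Rightarrow> real"
  assumes "antimono_on D x" "is_interval D" "is_interval S"
  shows "is_interval {t \<in> D. x t \<in> S}"
  unfolding is_interval_1
proof (intro ballI allI impI)
  fix s t v assume s: "s \<in> {t \<in> D. x t \<in> S}" and t: "t \<in> {t \<in> D. x t \<in> S}" and v: "s \<le> v \<and> v \<le> t"
  then have "v \<in> D"
    using assms(2) unfolding is_interval_1 by blast
  moreover have "x t \<le> x v" "x v \<le> x s"
    using monotone_onD[OF assms(1)] s t v \<open>v \<in> D\<close> by auto
  ultimately show "v \<in> {t \<in> D. x t \<in> S}"
    using assms(3) s t unfolding is_interval_1 by blast
qed

lemma floor_randomized_of_allocation:
  fixes P x u :: "real \<Rightarrow> real" and qbar c :: real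
  defines "Q \<equiv> qhat P qbar c"
  assumes IC: "IC_allocation \<theta>l \<theta>h x u" and bounds: "\<forall>t\<in>{\<theta>l..\<theta>h}. 0 \<le> x t \<and> x t \<le> qbar"
    and IR: "IR \<theta>l \<theta>h u" and u_top: "u \<theta>h = 0" and "0 < Q" "Q \<le> qbar"
  shows "floor_randomized P qbar c \<theta>l \<theta>h (\<lambda>t. floor_prob Q (x t)) (\<lambda>t. floor_quantity Q (x t)) u"
proof -
  let ?D = "{\<theta>l..\<theta>h}"
  have anti: "antimono_on ?D x"
    using IC by (rule IC_allocation_antimono)
  have less_if_less: "t < s" if "s \<in> ?D" "t \<in> ?D" "x s < x t" for s t
    using monotone_onD[OF anti, of s t] that by (cases "s \<le> t") auto
  define T1 T01 T0 where "T1 = {t \<in> ?D. x t \<in> {Q..}}" and "T01 = {t \<in> ?D. x t \<in> {0<..<Q}}"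
    and "T0 = {t \<in> ?D. x t \<in> {..0}}"
  have intervals: "is_interval T1" "is_interval T01" "is_interval T0"
    unfolding T1_def T01_def T0_def
    by (intro is_interval_antimono_preimage[OF anti is_interval_cc]; simp add: is_interval_convex_1)+
  have T0_zero: "x t = 0" if "t \<in> T0" for t
    using that bspec[OF bounds, of t] by (auto simp: T0_def)
  have "mechanism \<theta>l \<theta>h qbar (\<lambda>t. floor_prob Q (x t)) (\<lambda>t. floor_quantity Q (x t)) u"
    using bounds \<open>0 < Q\<close> \<open>Q \<le> qbar\<close>
    by (auto simp: mechanism_def floor_prob_def floor_quantity_def)
  moreover have "IC \<theta>l \<theta>h (\<lambda>t. floor_prob Q (x t)) (\<lambda>t. floor_quantity Q (x t)) u"
    using IC bounds floor_quantity_mult_prob[OF \<open>0 < Q\<close>]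
    by (simp add: IC_iff_IC_allocation IC_allocation_def)
  ultimately show ?thesis
    unfolding floor_randomized_def
  proof (intro conjI, goal_cases)
    case 5
    show ?case
    proof (rule exI[of _ T1], rule exI[of _ T01], rule exI[of _ T0], intro conjI intervals)
    qed (use T0_zero \<open>0 < Q\<close> in \<open>auto simp: T1_def T01_def T0_def floor_prob_def floor_quantity_def
        Q_def[symmetric] intro: less_if_less\<close>)
  qed (use IR u_top in blast)+
qed

lemma floor_randomized_cases:
  assumes "floor_randomized P qbar c \<theta>l \<theta>h r q u" "\<theta> \<in> {\<theta>l..\<theta>h}"
  shows "(q \<theta> = 0 \<and> r \<theta> = 0) \<or> (qhat P qbar c \<le> q \<theta> \<and> r \<theta> = 1)
    \<or> (q \<theta> = qhat P qbar c \<and> 0 < r \<theta> \<and> r \<theta> < 1)"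
  using assms unfolding floor_randomized_def by blast

locale floor_randomized_DD = inverse_demand P qbar for P qbar +
  fixes c \<theta>l \<theta>h :: real and r q u :: "real \<Rightarrow> real"
  assumes \<theta>l_pos: "0 < \<theta>l" and \<theta>l_less_\<theta>h: "\<theta>l < \<theta>h" and c_pos: "0 < c" and \<theta>h_less: "\<theta>h < P 0"
    and TS_efficient_pos: "TS P c \<theta>h (qe P qbar \<theta>h) > 0"
    and floor_randomized: "floor_randomized P qbar c \<theta>l \<theta>h r q u"
    and DD: "DD P qbar \<theta>l \<theta>h q"
begin

abbreviation "Q \<equiv> qhat P qbar c"

definition alloc :: "real \<Rightarrow> real" where
  "alloc t = q t * r t"

definition alloc_lc :: "real \<Rightarrow> real" where
  "alloc_lc = left_inf alloc \<theta>l"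

definition r_lc :: "real \<Rightarrow> real" where
  "r_lc t = floor_prob Q (alloc_lc t)"

definition q_lc :: "real \<Rightarrow> real" where
  "q_lc t = floor_quantity Q (alloc_lc t)"

lemma qhat_floor: "0 < Q" "Q \<le> qbar" "V P Q - Q * P Q = c"
  using qhat_spec[OF _ _ c_pos TS_efficient_pos] \<theta>l_pos \<theta>l_less_\<theta>h \<theta>h_less by auto

lemma type_range:
  assumes "\<theta> \<in> {\<theta>l..\<theta>h}"
  shows "0 \<le> \<theta>" "\<theta> \<le> P 0"
  using assms \<theta>l_pos \<theta>h_less by auto

lemma Q_less_qe: "\<theta> \<in> {\<theta>l..\<theta>h} \<Longrightarrow> Q < qe P qbar \<theta>"
  using qhat_spec(4)[OF _ _ c_pos TS_efficient_pos] qe_antimono[of \<theta> \<theta>h] \<theta>l_pos \<theta>h_less by force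

lemma q_le_qe: "\<theta> \<in> {\<theta>l..\<theta>h} \<Longrightarrow> q \<theta> \<le> qe P qbar \<theta>"
  using DD by (simp add: DD_def)

lemma is_mechanism: "mechanism \<theta>l \<theta>h qbar r q u"
  using floor_randomized by (simp add: floor_randomized_def)

lemma IC_alloc: "IC_allocation \<theta>l \<theta>h alloc u"
  using floor_randomized IC_iff_IC_allocation[of \<theta>l \<theta>h r q u]
  by (simp add: floor_randomized_def alloc_def[abs_def])

lemma alloc_bounds: "\<theta> \<in> {\<theta>l..\<theta>h} \<Longrightarrow> 0 \<le> alloc \<theta> \<and> alloc \<theta> \<le> q \<theta>"
  using is_mechanism by (auto simp: mechanism_def alloc_def intro: mult_left_le)

lemma alloc_antimono: "antimono_on {\<theta>l..\<theta>h} alloc"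
  using IC_alloc by (rule IC_allocation_antimono)

lemma r_left_endpoint: "r \<theta>l = 1"
proof -
  have "Q < q \<theta>l"
    using Q_less_qe[of \<theta>l] DD \<theta>l_less_\<theta>h by (simp add: DD_def)
  then show ?thesis
    using floor_randomized_cases[OF floor_randomized, of \<theta>l] qhat_floor(1) \<theta>l_less_\<theta>h by auto
qed

lemma alloc_lc_bounds:
  assumes "\<theta> \<in> {\<theta>l..\<theta>h}"
  shows "alloc \<theta> \<le> alloc_lc \<theta>" "0 \<le> alloc_lc \<theta>" "alloc_lc \<theta> \<le> qbar"
proof -
  show "alloc \<theta> \<le> alloc_lc \<theta>"
    using le_left_inf[OF alloc_antimono assms] by (simp add: alloc_lc_def)
  with alloc_bounds[OF assms] show "0 \<le> alloc_lc \<theta>"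
    by simp
  have "alloc_lc \<theta> \<le> alloc_lc \<theta>l"
    using monotone_onD[OF left_inf_antimono[OF alloc_antimono], of \<theta>l \<theta>] assms \<theta>l_less_\<theta>h
    by (simp add: alloc_lc_def)
  also have "\<dots> \<le> q \<theta>l"
    using alloc_bounds[of \<theta>l] \<theta>l_less_\<theta>h by (simp add: alloc_lc_def)
  also have "\<dots> \<le> qbar"
    using is_mechanism \<theta>l_less_\<theta>h by (simp add: mechanism_def)
  finally show "alloc_lc \<theta> \<le> qbar" .
qed

lemma alloc_lc_le_qe:
  assumes "\<theta> \<in> {\<theta>l..\<theta>h}"
  shows "alloc_lc \<theta> \<le> qe P qbar \<theta>"
proof (cases "\<theta> = \<theta>l")
  case True
  then show ?thesis
    using alloc_bounds[OF assms] q_le_qe[OF assms] by (simp add: alloc_lc_def)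
next
  case False
  note bounds = alloc_lc_bounds(2,3)[OF assms]
  have "\<theta>l < \<theta>"
    using False assms by simp
  then have "\<theta> \<le> P (alloc_lc \<theta>)"
  proof (rule dense_le_bounded)
    fix s assume s: "\<theta>l < s" "s < \<theta>"
    then have s_in: "s \<in> {\<theta>l..\<theta>h}"
      using assms by auto
    have "alloc_lc \<theta> \<le> qe P qbar s"
      using left_inf_le[OF alloc_antimono assms s_in s(2)] alloc_bounds[OF s_in] q_le_qe[OF s_in]
      by (simp add: alloc_lc_def)
    then show "s \<le> P (alloc_lc \<theta>)"
      using le_qe_iff[of s "alloc_lc \<theta>"] type_range[OF s_in] bounds by simp
  qed
  then show ?thesis
    using le_qe_iff[of \<theta> "alloc_lc \<theta>"] type_range[OF assms] bounds by simp
qed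

lemma q_lc_mult_r_lc: "\<theta> \<in> {\<theta>l..\<theta>h} \<Longrightarrow> q_lc \<theta> * r_lc \<theta> = alloc_lc \<theta>"
  using floor_quantity_mult_prob[OF qhat_floor(1) alloc_lc_bounds(2)] by (simp add: q_lc_def r_lc_def)

theorem floor_randomized_lc: "floor_randomized P qbar c \<theta>l \<theta>h r_lc q_lc u"
proof -
  have "IC_allocation \<theta>l \<theta>h alloc_lc u"
    unfolding alloc_lc_def using IC_alloc alloc_bounds by (intro IC_allocation_left_inf) auto
  moreover have "\<forall>t\<in>{\<theta>l..\<theta>h}. 0 \<le> alloc_lc t \<and> alloc_lc t \<le> qbar"
    using alloc_lc_bounds(2,3) by blast
  moreover have "IR \<theta>l \<theta>h u" "u \<theta>h = 0"
    using floor_randomized by (simp_all add: floor_randomized_def)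
  ultimately show ?thesis
    using floor_randomized_of_allocation qhat_floor(1,2) unfolding r_lc_def[abs_def] q_lc_def[abs_def]
    by blast
qed

theorem DD_lc: "DD P qbar \<theta>l \<theta>h q_lc"
  unfolding DD_def
proof (intro conjI ballI)
  fix \<theta> assume \<theta>: "\<theta> \<in> {\<theta>l..\<theta>h}"
  show "q_lc \<theta> \<le> qe P qbar \<theta>"
    using alloc_lc_le_qe[OF \<theta>] Q_less_qe[OF \<theta>] qe_spec(1)[OF type_range[OF \<theta>]]
    by (auto simp: q_lc_def floor_quantity_def)
next
  show "q_lc \<theta>l = qe P qbar \<theta>l"
    using DD Q_less_qe[of \<theta>l] \<theta>l_less_\<theta>h r_left_endpoint
    by (simp add: q_lc_def alloc_lc_def alloc_def floor_quantity_def DD_def)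
qed

theorem left_continuous_lc: "left_continuous_mech \<theta>l \<theta>h r_lc q_lc"
  unfolding left_continuous_mech_def
proof
  fix \<theta> assume \<theta>: "\<theta> \<in> {\<theta>l<..\<theta>h}"
  have "\<forall>\<^sub>F t in at_left \<theta>. alloc_lc t = q_lc t * r_lc t"
    using eventually_at_left_real[of \<theta>l \<theta>] \<theta> by (auto elim!: eventually_mono simp: q_lc_mult_r_lc)
  moreover have "(alloc_lc \<longlongrightarrow> alloc_lc \<theta>) (at_left \<theta>)"
    using tendsto_left_inf[OF alloc_antimono] \<theta> by (simp add: alloc_lc_def)
  ultimately have "((\<lambda>t. q_lc t * r_lc t) \<longlongrightarrow> q_lc \<theta> * r_lc \<theta>) (at_left \<theta>)"
    using q_lc_mult_r_lc[of \<theta>] \<theta> by (simp add: tendsto_cong)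
  then show "continuous (at_left \<theta>) (\<lambda>t. q_lc t * r_lc t)"
    by (simp add: continuous_within)
qed

lemma surplus_eq:
  assumes "\<theta> \<in> {\<theta>l..\<theta>h}"
  shows "r \<theta> * TS P c \<theta> (q \<theta>) = floor_surplus P c Q \<theta> (alloc \<theta>)"
proof -
  have "r \<theta> = 0 \<or> (Q \<le> q \<theta> \<and> r \<theta> = 1) \<or> (q \<theta> = Q \<and> r \<theta> < 1)"
    using floor_randomized_cases[OF floor_randomized assms] by blast
  from surplus_eq_floor_surplus[OF qhat_floor(1) this] show ?thesis
    by (simp add: alloc_def)
qed

lemma surplus_lc_eq: "\<theta> \<in> {\<theta>l..\<theta>h} \<Longrightarrow> r_lc \<theta> * TS P c \<theta> (q_lc \<theta>) = floor_surplus P c Q \<theta> (alloc_lc \<theta>)"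
  using floor_prob_mult_TS[OF qhat_floor(1) alloc_lc_bounds(2)] by (simp add: r_lc_def q_lc_def)

lemma surplus_gain:
  assumes "\<theta> \<in> {\<theta>l..\<theta>h}"
  shows "r \<theta> * TS P c \<theta> (q \<theta>) \<le> r_lc \<theta> * TS P c \<theta> (q_lc \<theta>)"
    and "alloc \<theta> < alloc_lc \<theta> \<Longrightarrow> r \<theta> * TS P c \<theta> (q \<theta>) < r_lc \<theta> * TS P c \<theta> (q_lc \<theta>)"
  using floor_surplus_mono[OF qhat_floor(1,3) _ _ Q_less_qe[OF assms], of "alloc \<theta>" "alloc_lc \<theta>"]
    floor_surplus_strict_mono[OF qhat_floor(1,3) _ _ Q_less_qe[OF assms], of "alloc \<theta>" "alloc_lc \<theta>"]
    type_range[OF assms] alloc_bounds[OF assms] alloc_lc_bounds(1)[OF assms] alloc_lc_le_qe[OF assms]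
  by (simp_all add: surplus_eq[OF assms] surplus_lc_eq[OF assms])

lemma lc_dominates:
  assumes "\<theta> \<in> {\<theta>l..\<theta>h}"
  shows "q \<theta> * r \<theta> \<le> q_lc \<theta> * r_lc \<theta> \<and> CS P c \<theta> r q u \<le> CS P c \<theta> r_lc q_lc u
    \<and> RS P c \<alpha> \<theta> r q u \<le> RS P c \<alpha> \<theta> r_lc q_lc u"
  using alloc_lc_bounds(1)[OF assms] q_lc_mult_r_lc[OF assms] surplus_gain(1)[OF assms]
  by (simp add: alloc_def CS_def RS_def)

lemma lc_eq_if_alloc_eq:
  assumes "\<theta> \<in> {\<theta>l..\<theta>h}" "alloc_lc \<theta> = alloc \<theta>"
  shows "q_lc \<theta> * r_lc \<theta> = q \<theta> * r \<theta> \<and> CS P c \<theta> r_lc q_lc u = CS P c \<theta> r q u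
    \<and> RS P c \<alpha> \<theta> r_lc q_lc u = RS P c \<alpha> \<theta> r q u"
  using assms(2) q_lc_mult_r_lc[OF assms(1)] surplus_eq[OF assms(1)] surplus_lc_eq[OF assms(1)]
  by (simp add: alloc_def CS_def RS_def)

lemma lc_strict_at_jump:
  assumes "\<theta> \<in> {\<theta>l<..\<theta>h}" "\<not> continuous (at_left \<theta>) (\<lambda>t. q t * r t)"
  shows "q \<theta> * r \<theta> < q_lc \<theta> * r_lc \<theta> \<and> CS P c \<theta> r q u < CS P c \<theta> r_lc q_lc u
    \<and> RS P c \<alpha> \<theta> r q u < RS P c \<alpha> \<theta> r_lc q_lc u"
proof -
  have \<theta>: "\<theta> \<in> {\<theta>l..\<theta>h}"
    using assms(1) by simp
  have "alloc_lc \<theta> \<noteq> alloc \<theta>"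
    using continuous_at_left_iff_left_inf_eq[OF alloc_antimono, of \<theta>] assms
    by (simp add: alloc_lc_def alloc_def[abs_def])
  then have "alloc \<theta> < alloc_lc \<theta>"
    using alloc_lc_bounds(1)[OF \<theta>] by simp
  then show ?thesis
    using q_lc_mult_r_lc[OF \<theta>] surplus_gain(2)[OF \<theta>] by (simp add: alloc_def CS_def RS_def)
qed

lemma AE_lc_eq:
  "AE \<theta> in lborel. \<theta> \<in> {\<theta>l..\<theta>h} \<longrightarrow> q_lc \<theta> * r_lc \<theta> = q \<theta> * r \<theta>
    \<and> CS P c \<theta> r_lc q_lc u = CS P c \<theta> r q u \<and> RS P c \<alpha> \<theta> r_lc q_lc u = RS P c \<alpha> \<theta> r q u"
proof -
  have "{t \<in> {\<theta>l..\<theta>h}. alloc_lc t \<noteq> alloc t} \<in> null_sets lborel"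
    using countable_left_inf_neq[OF alloc_antimono] countable_imp_null_set_lborel
    by (simp add: alloc_lc_def)
  then show ?thesis
    by (rule AE_I') (use lc_eq_if_alloc_eq in auto)
qed

end

theorem lemma5:
  fixes \<theta>l \<theta>h c qbar \<alpha> :: real and P r q u :: "real \<Rightarrow> real"
  assumes "0 < \<theta>l" and "\<theta>l < \<theta>h" and "0 < c" and "0 < qbar"
    and "continuous_on {0..qbar} P" and "strict_antimono_on {0..qbar} P" and "P qbar = 0"
    and "\<theta>h < P 0"
    and A2: "TS P c \<theta>h (qe P qbar \<theta>h) > 0"
    and "0 \<le> \<alpha>" and "\<alpha> < 1"
    and FR: "floor_randomized P qbar c \<theta>l \<theta>h r q u"
    and DDM: "DD P qbar \<theta>l \<theta>h q"
  shows "\<exists>r' q'. floor_randomized P qbar c \<theta>l \<theta>h r' q' u \<and> DD P qbar \<theta>l \<theta>h q'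
      \<and> left_continuous_mech \<theta>l \<theta>h r' q'
      \<and> (\<forall>\<theta>\<in>{\<theta>l..\<theta>h}. q' \<theta> * r' \<theta> \<ge> q \<theta> * r \<theta>
            \<and> CS P c \<theta> r' q' u \<ge> CS P c \<theta> r q u
            \<and> RS P c \<alpha> \<theta> r' q' u \<ge> RS P c \<alpha> \<theta> r q u)
      \<and> (AE \<theta> in lborel. \<theta> \<in> {\<theta>l..\<theta>h} \<longrightarrow>
            q' \<theta> * r' \<theta> = q \<theta> * r \<theta>
            \<and> CS P c \<theta> r' q' u = CS P c \<theta> r q u
            \<and> RS P c \<alpha> \<theta> r' q' u = RS P c \<alpha> \<theta> r q u)
      \<and> (\<forall>\<theta>\<in>{\<theta>l<..\<theta>h}. \<not> continuous (at_left \<theta>) (\<lambda>t. q t * r t) \<longrightarrow>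
            q' \<theta> * r' \<theta> > q \<theta> * r \<theta>
            \<and> CS P c \<theta> r' q' u > CS P c \<theta> r q u
            \<and> RS P c \<alpha> \<theta> r' q' u > RS P c \<alpha> \<theta> r q u)"
proof -
  interpret floor_randomized_DD P qbar c \<theta>l \<theta>h r q u
    using assms by unfold_locales auto
  show ?thesis
    using floor_randomized_lc DD_lc left_continuous_lc lc_dominates lc_strict_at_jump AE_lc_eq by blast
qed

end
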